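(* The GT system $(\mathcal L,\{r_0,r_1,r_2\})$ is terminating. Moreover, every derivation sequence $G=G_0\Rightarrow G_1\Rightarrow\cdots\Rightarrow G_n$ of this system starting from a TLRG $G$ has length $n\le 2|V_G|$.
   Context: Graphs over a label alphabet $(\mathcal L_V,\mathcal L_E)$ are tuples $G=(V,E,s,t,l,m,p)$ with $V,E$ finite, $s,t:E\to V$ total, $l:V\rightharpoonup\mathcal L_V$ partial, $m:E\to\mathcal L_E$ total, $p:V\rightharpoonup\{0,1\}$ partial (rootedness; $p(v)=1$ means $v$ is a root). TLRG = $l,p$ total. Morphisms preserve sources, targets, edge labels, and node labels and rootedness wherever defined. A rule $\langle L\leftarrow K\rightarrow R\rangle$ has TLRGs $L,R$ and a common subgraph $K$ (sets included, $s,t,m$ restricted, partial maps $l_K\subseteq l_L$, $p_K\subseteq p_L$, likewise for $R$). It is applied to a TLRG $G$ via an injective morphism $g:L\to G$ satisfying the dangling condition (no edge outside $g(L)$ incident to a node of $g(V_L\setminus V_K)$) by deleting images of items of $L$ not in $K$ and undefining label/rootedness of $g_V(v)$ where undefined for $v\in V_K$, then adding disjointly the items of $R$ not in $K$ and setting label/rootedness of $g_V(v)$ to $l_R(v)/p_R(v)$ where undefined in $K$; $G\Rightarrow H$ when $H$ is isomorphic to the result. A system is terminating if there is no infinite sequence $G_0\Rightarrow G_1\Rightarrow\cdots$. Here $\mathcal L=(\{\square,\triangle\},\{\square\})$ and all edges are labelled $\square$. Rule $r_0$: $L$ has an unrooted node $1$ labelled $\square$, a rooted node $2$ labelled $\square$,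 and an edge $1\to 2$; $K$ consists of node $1$ with undefined label and rootedness; $R$ consists of node $1$, rooted, labelled $\square$. Rule $r_1$: identical to $r_0$ except that node $1$ of $L$ is labelled $\triangle$. Rule $r_2$: $L$ has a rooted node $1$ labelled $\square$, an unrooted node $2$ labelled $\square$, and an edge $1\to 2$; $K$ consists of nodes $1,2$ with undefined labels and rootedness and no edges; $R$ has node $1$ unrooted labelled $\triangle$, node $2$ rooted labelled $\square$, and an edge $1\to 2$. *)

theory Defs
  imports Main
begin

datatype nlabel = Sq | Tri
datatype elabel = ESq

text \<open>A graph with node type 'v and edge type 'e.  Partial node labelling and
  rootedness are modelled by option-valued functions (None = undefined);
  only values on the carrier sets matter.\<close>
record ('v, 'e) graph =
  nodes :: "'v set"
  edges :: "'e set"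
  src   :: "'e \<Rightarrow> 'v"
  tgt   :: "'e \<Rightarrow> 'v"
  nlab  :: "'v \<Rightarrow> nlabel option"
  elab  :: "'e \<Rightarrow> elabel"
  root  :: "'v \<Rightarrow> bool option"

definition is_graph :: "('v, 'e) graph \<Rightarrow> bool" where
  "is_graph G \<longleftrightarrow> finite (nodes G) \<and> finite (edges G) \<and>
     (\<forall>e\<in>edges G. src G e \<in> nodes G \<and> tgt G e \<in> nodes G)"

definition tlrg :: "('v, 'e) graph \<Rightarrow> bool" where
  "tlrg G \<longleftrightarrow> is_graph G \<and> (\<forall>v\<in>nodes G. nlab G v \<noteq> None \<and> root G v \<noteq> None)"

definition morphism ::
  "('a, 'b) graph \<Rightarrow> ('c, 'd) graph \<Rightarrow> ('a \<Rightarrow> 'c) \<Rightarrow> ('b \<Rightarrow> 'd) \<Rightarrow> bool" where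
  "morphism A B gV gE \<longleftrightarrow>
     (\<forall>v\<in>nodes A. gV v \<in> nodes B) \<and> (\<forall>e\<in>edges A. gE e \<in> edges B) \<and>
     (\<forall>e\<in>edges A. src B (gE e) = gV (src A e) \<and> tgt B (gE e) = gV (tgt A e)
                   \<and> elab B (gE e) = elab A e) \<and>
     (\<forall>v\<in>nodes A. \<forall>x. nlab A v = Some x \<longrightarrow> nlab B (gV v) = Some x) \<and>
     (\<forall>v\<in>nodes A. \<forall>x. root A v = Some x \<longrightarrow> root B (gV v) = Some x)"

definition iso ::
  "('a, 'b) graph \<Rightarrow> ('c, 'd) graph \<Rightarrow> bool" where
  "iso A B \<longleftrightarrow> (\<exists>gV gE. bij_betw gV (nodes A) (nodes B) \<and> bij_betw gE (edges A) (edges B) \<and>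
     (\<forall>e\<in>edges A. src B (gE e) = gV (src A e) \<and> tgt B (gE e) = gV (tgt A e)
                   \<and> elab B (gE e) = elab A e) \<and>
     (\<forall>v\<in>nodes A. nlab B (gV v) = nlab A v \<and> root B (gV v) = root A v))"

type_synonym rule = "(nat, nat) graph \<times> (nat, nat) graph \<times> (nat, nat) graph"

definition lhs :: "rule \<Rightarrow> (nat, nat) graph" where "lhs r = fst r"
definition interf :: "rule \<Rightarrow> (nat, nat) graph" where "interf r = fst (snd r)"
definition rhs :: "rule \<Rightarrow> (nat, nat) graph" where "rhs r = snd (snd r)"

definition dangling_ok ::
  "rule \<Rightarrow> ('v, 'e) graph \<Rightarrow> (nat \<Rightarrow> 'v) \<Rightarrow> (nat \<Rightarrow> 'e) \<Rightarrow> bool" where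
  "dangling_ok r G gV gE \<longleftrightarrow>
     (\<forall>e\<in>edges G - gE ` edges (lhs r).
        src G e \<notin> gV ` (nodes (lhs r) - nodes (interf r)) \<and>
        tgt G e \<notin> gV ` (nodes (lhs r) - nodes (interf r)))"

text \<open>The result of applying rule r at match (gV, gE): kept items of G are
  tagged Inl, items added from R (not in K) are tagged Inr.\<close>
definition apply_rule ::
  "rule \<Rightarrow> ('v, 'e) graph \<Rightarrow> (nat \<Rightarrow> 'v) \<Rightarrow> (nat \<Rightarrow> 'e) \<Rightarrow> ('v + nat, 'e + nat) graph" where
  "apply_rule r G gV gE =
    (let L = lhs r; K = interf r; R = rhs r;
         kpre = (\<lambda>v. THE k. k \<in> nodes K \<and> gV k = v);
         mapR = (\<lambda>x. if x \<in> nodes K then Inl (gV x) else Inr x)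
     in \<lparr> nodes = Inl ` (nodes G - gV ` (nodes L - nodes K)) \<union> Inr ` (nodes R - nodes K),
          edges = Inl ` (edges G - gE ` (edges L - edges K)) \<union> Inr ` (edges R - edges K),
          src = (\<lambda>x. case x of Inl e \<Rightarrow> Inl (src G e) | Inr e \<Rightarrow> mapR (src R e)),
          tgt = (\<lambda>x. case x of Inl e \<Rightarrow> Inl (tgt G e) | Inr e \<Rightarrow> mapR (tgt R e)),
          nlab = (\<lambda>x. case x of
                    Inl v \<Rightarrow> (if v \<in> gV ` nodes K
                               then (if nlab K (kpre v) = None then nlab R (kpre v) else nlab G v)
                               else nlab G v)
                  | Inr v \<Rightarrow> nlab R v),
          elab = (\<lambda>x. case x of Inl e \<Rightarrow> elab G e | Inr e \<Rightarrow> elab R e),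
          root = (\<lambda>x. case x of
                    Inl v \<Rightarrow> (if v \<in> gV ` nodes K
                               then (if root K (kpre v) = None then root R (kpre v) else root G v)
                               else root G v)
                  | Inr v \<Rightarrow> root R v) \<rparr>)"

definition direct_derivation :: "rule \<Rightarrow> ('v, 'e) graph \<Rightarrow> ('v, 'e) graph \<Rightarrow> bool" where
  "direct_derivation r G H \<longleftrightarrow> tlrg G \<and> tlrg H \<and>
     (\<exists>gV gE. morphism (lhs r) G gV gE \<and> inj_on gV (nodes (lhs r)) \<and> inj_on gE (edges (lhs r))
              \<and> dangling_ok r G gV gE \<and> iso (apply_rule r G gV gE) H)"

definition step :: "rule set \<Rightarrow> ('v, 'e) graph \<Rightarrow> ('v, 'e) graph \<Rightarrow> bool" where
  "step Rs G H \<longleftrightarrow> (\<exists>r\<in>Rs. direct_derivation r G H)"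

definition terminating :: "rule set \<Rightarrow> ('v, 'e) graph itself \<Rightarrow> bool" where
  "terminating Rs _ \<longleftrightarrow> \<not> (\<exists>f :: nat \<Rightarrow> ('v, 'e) graph. \<forall>i. step Rs (f i) (f (Suc i)))"

definition r0 :: rule where
  "r0 = (\<lparr> nodes = {1, 2}, edges = {0}, src = (\<lambda>_. 1), tgt = (\<lambda>_. 2),
            nlab = [1 \<mapsto> Sq, 2 \<mapsto> Sq], elab = (\<lambda>_. ESq), root = [1 \<mapsto> False, 2 \<mapsto> True] \<rparr>,
         \<lparr> nodes = {1}, edges = {}, src = (\<lambda>_. 1), tgt = (\<lambda>_. 1),
            nlab = Map.empty, elab = (\<lambda>_. ESq), root = Map.empty \<rparr>,
         \<lparr> nodes = {1}, edges = {}, src = (\<lambda>_. 1), tgt = (\<lambda>_. 1),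
            nlab = [1 \<mapsto> Sq], elab = (\<lambda>_. ESq), root = [1 \<mapsto> True] \<rparr>)"

definition r1 :: rule where
  "r1 = (\<lparr> nodes = {1, 2}, edges = {0}, src = (\<lambda>_. 1), tgt = (\<lambda>_. 2),
            nlab = [1 \<mapsto> Tri, 2 \<mapsto> Sq], elab = (\<lambda>_. ESq), root = [1 \<mapsto> False, 2 \<mapsto> True] \<rparr>,
         \<lparr> nodes = {1}, edges = {}, src = (\<lambda>_. 1), tgt = (\<lambda>_. 1),
            nlab = Map.empty, elab = (\<lambda>_. ESq), root = Map.empty \<rparr>,
         \<lparr> nodes = {1}, edges = {}, src = (\<lambda>_. 1), tgt = (\<lambda>_. 1),
            nlab = [1 \<mapsto> Sq], elab = (\<lambda>_. ESq), root = [1 \<mapsto> True] \<rparr>)"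

definition r2 :: rule where
  "r2 = (\<lparr> nodes = {1, 2}, edges = {0}, src = (\<lambda>_. 1), tgt = (\<lambda>_. 2),
            nlab = [1 \<mapsto> Sq, 2 \<mapsto> Sq], elab = (\<lambda>_. ESq), root = [1 \<mapsto> True, 2 \<mapsto> False] \<rparr>,
         \<lparr> nodes = {1, 2}, edges = {}, src = (\<lambda>_. 1), tgt = (\<lambda>_. 1),
            nlab = Map.empty, elab = (\<lambda>_. ESq), root = Map.empty \<rparr>,
         \<lparr> nodes = {1, 2}, edges = {0}, src = (\<lambda>_. 1), tgt = (\<lambda>_. 2),
            nlab = [1 \<mapsto> Tri, 2 \<mapsto> Sq], elab = (\<lambda>_. ESq), root = [1 \<mapsto> False, 2 \<mapsto> True] \<rparr>)"

end

theory Submission imports Defs begin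

text \<open>Every step strictly decreases the weight \<open>|V| + |{v. l(v) = \<square>}|\<close>, which is at most
  \<open>2|V|\<close>. Rules \<open>r\<^sub>0\<close> and \<open>r\<^sub>1\<close> delete a \<open>\<square>\<close>-node and make at most one other node a
  \<open>\<square>\<close>-node; rule \<open>r\<^sub>2\<close> keeps all nodes and turns one \<open>\<square>\<close>-node into a \<open>\<triangle>\<close>-node, while
  its second node stays \<open>\<square>\<close>.\<close>

definition square_nodes :: "('v, 'e) graph \<Rightarrow> 'v set" where
  "square_nodes G = {v \<in> nodes G. nlab G v = Some Sq}"

definition weight :: "('v, 'e) graph \<Rightarrow> nat" where
  "weight G = card (nodes G) + card (square_nodes G)"

lemma finite_square_nodes: "finite (nodes G) \<Longrightarrow> finite (square_nodes G)"
  unfolding square_nodes_def by simp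

lemma weight_le_twice_card_nodes:
  assumes "finite (nodes G)"
  shows "weight G \<le> 2 * card (nodes G)"
proof -
  have "card (square_nodes G) \<le> card (nodes G)"
    using assms unfolding square_nodes_def by (intro card_mono) auto
  then show ?thesis unfolding weight_def by simp
qed

lemma weight_iso:
  assumes "iso A B"
  shows "weight B = weight A"
proof -
  obtain gV where bij: "bij_betw gV (nodes A) (nodes B)"
    and lab: "\<forall>v\<in>nodes A. nlab B (gV v) = nlab A v"
    using assms unfolding iso_def by blast
  have "square_nodes B = gV ` square_nodes A"
    using bij lab unfolding square_nodes_def bij_betw_def by (auto; force)
  moreover have "inj_on gV (square_nodes A)"
    using bij unfolding bij_betw_def square_nodes_def by (auto intro: inj_on_subset)
  ultimately have "card (square_nodes B) = card (square_nodes A)"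
    by (simp add: card_image)
  moreover have "card (nodes B) = card (nodes A)"
    using bij by (simp add: bij_betw_same_card)
  ultimately show ?thesis unfolding weight_def by simp
qed

lemma card_nodes_apply_rule:
  assumes "finite (nodes G)" "finite (nodes (rhs r))"
    and "gV ` nodes (lhs r) \<subseteq> nodes G" "inj_on gV (nodes (lhs r))"
  shows "card (nodes (apply_rule r G gV gE)) =
    card (nodes G) - card (nodes (lhs r) - nodes (interf r)) + card (nodes (rhs r) - nodes (interf r))"
proof -
  let ?D = "gV ` (nodes (lhs r) - nodes (interf r))"
  have D: "?D \<subseteq> nodes G" "card ?D = card (nodes (lhs r) - nodes (interf r))"
    using assms(3,4) by (auto intro: card_image inj_on_subset)
  have nodes_eq: "nodes (apply_rule r G gV gE) =
      Inl ` (nodes G - ?D) \<union> Inr ` (nodes (rhs r) - nodes (interf r))"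
    unfolding apply_rule_def by (simp add: Let_def)
  have "card (nodes (apply_rule r G gV gE)) =
      card (nodes G - ?D) + card (nodes (rhs r) - nodes (interf r))"
    unfolding nodes_eq using D assms(1,2)
    by (subst card_Un_disjoint) (auto simp: card_image finite_subset)
  then show ?thesis
    using D assms(1) by (simp add: card_Diff_subset finite_subset)
qed

lemma weight_apply_r01_less:
  fixes G :: "('v, 'e) graph"
  assumes r: "r = r0 \<or> r = r1" and m: "morphism (lhs r) G gV gE"
    and inj: "inj_on gV (nodes (lhs r))" and fin: "finite (nodes G)"
  shows "weight (apply_rule r G gV gE) < weight G"
proof -
  let ?H = "apply_rule r G gV gE"
  have sq2: "gV 2 \<in> square_nodes G"
    using m r unfolding morphism_def lhs_def r0_def r1_def square_nodes_def by auto
  have sub: "square_nodes ?H \<subseteq> Inl ` insert (gV 1) (square_nodes G - {gV 2})"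
    using r unfolding square_nodes_def apply_rule_def lhs_def interf_def rhs_def r0_def r1_def
    by (auto simp: Let_def split: if_splits)
  have "card (square_nodes ?H) \<le> card (Inl ` insert (gV 1) (square_nodes G - {gV 2}) :: ('v + nat) set)"
    using sub finite_square_nodes[OF fin] by (intro card_mono) auto
  also have "\<dots> = card (insert (gV 1) (square_nodes G - {gV 2}))"
    by (meson card_image inj_Inl inj_on_subset subset_UNIV)
  also have "\<dots> \<le> Suc (card (square_nodes G - {gV 2}))"
    using finite_square_nodes[OF fin] by (simp add: card_insert_if)
  also have "\<dots> = card (square_nodes G)"
    using sq2 finite_square_nodes[OF fin] by (intro card_Suc_Diff1)
  finally have "card (square_nodes ?H) \<le> card (square_nodes G)" .
  moreover have "card (nodes ?H) = card (nodes G) - 1"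
    using card_nodes_apply_rule[OF fin _ _ inj] m r
    unfolding morphism_def lhs_def interf_def rhs_def r0_def r1_def by auto
  moreover have "card (nodes G) \<noteq> 0"
    using sq2 fin unfolding square_nodes_def by auto
  ultimately show ?thesis unfolding weight_def by linarith
qed

lemma weight_apply_r2_less:
  fixes G :: "('v, 'e) graph"
  assumes m: "morphism (lhs r2) G gV gE" and inj: "inj_on gV (nodes (lhs r2))"
    and fin: "finite (nodes G)"
  shows "weight (apply_rule r2 G gV gE) < weight G"
proof -
  let ?H = "apply_rule r2 G gV gE"
  have sq: "gV 1 \<in> square_nodes G" "gV 2 \<in> square_nodes G"
    using m unfolding morphism_def lhs_def r2_def square_nodes_def by auto
  have ne: "gV 1 \<noteq> gV 2"
    using inj unfolding lhs_def r2_def by (auto dest: inj_onD)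
  have pre1: "(THE k. (k = 1 \<or> k = 2) \<and> gV k = gV 1) = 1"
    and pre2: "(THE k. (k = 1 \<or> k = 2) \<and> gV k = gV 2) = 2"
    using ne by (auto intro: the_equality)
  have sub: "square_nodes ?H \<subseteq> Inl ` (square_nodes G - {gV 1})"
  proof
    fix x assume x: "x \<in> square_nodes ?H"
    then obtain v where v: "x = Inl v" "v \<in> nodes G"
      unfolding square_nodes_def apply_rule_def r2_def lhs_def interf_def rhs_def
      by (auto simp: Let_def)
    show "x \<in> Inl ` (square_nodes G - {gV 1})"
      using x v pre1 pre2 ne sq
      unfolding square_nodes_def apply_rule_def lhs_def interf_def rhs_def r2_def
      by (cases "v = gV 1 \<or> v = gV 2") (auto simp: Let_def)
  qed
  have "card (square_nodes ?H) \<le> card (Inl ` (square_nodes G - {gV 1}) :: ('v + nat) set)"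
    using sub finite_square_nodes[OF fin] by (intro card_mono) auto
  also have "\<dots> = card (square_nodes G - {gV 1})"
    by (meson card_image inj_Inl inj_on_subset subset_UNIV)
  also have "\<dots> < card (square_nodes G)"
    using sq(1) finite_square_nodes[OF fin] by (intro card_Diff1_less)
  finally have "card (square_nodes ?H) < card (square_nodes G)" .
  moreover have "card (nodes ?H) = card (nodes G)"
    using card_nodes_apply_rule[OF fin _ _ inj] m
    unfolding morphism_def lhs_def interf_def rhs_def r2_def by auto
  ultimately show ?thesis unfolding weight_def by linarith
qed

lemma step_weight_less:
  assumes "step {r0, r1, r2} G H"
  shows "weight H < weight G"
proof -
  obtain r gV gE where r: "r \<in> {r0, r1, r2}" and "tlrg G"
    and m: "morphism (lhs r) G gV gE" "inj_on gV (nodes (lhs r))"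
    and iso: "iso (apply_rule r G gV gE) H"
    using assms unfolding step_def direct_derivation_def by blast
  then have "finite (nodes G)" unfolding tlrg_def is_graph_def by simp
  then have "weight (apply_rule r G gV gE) < weight G"
    using r m weight_apply_r01_less weight_apply_r2_less by blast
  then show ?thesis using weight_iso[OF iso] by simp
qed

lemma strictly_decreasing_chain_bound:
  fixes \<mu> :: "'a \<Rightarrow> nat"
  assumes "\<forall>i<n. \<mu> (f (Suc i)) < \<mu> (f i)"
  shows "\<mu> (f n) + n \<le> \<mu> (f 0)"
  using assms by (induction n) fastforce+

lemma derivation_length_bound:
  assumes "tlrg (f 0)" "\<forall>i<n. step {r0, r1, r2} (f i) (f (Suc i))"
  shows "n \<le> 2 * card (nodes (f 0))"
proof -
  have "weight (f n) + n \<le> weight (f 0)"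
    using assms(2) step_weight_less by (intro strictly_decreasing_chain_bound) blast
  moreover have "weight (f 0) \<le> 2 * card (nodes (f 0))"
    using assms(1) unfolding tlrg_def is_graph_def by (simp add: weight_le_twice_card_nodes)
  ultimately show ?thesis by linarith
qed

theorem lemma4p5:
  shows "terminating {r0, r1, r2} TYPE(('v, 'e) graph) \<and>
         (\<forall>(f :: nat \<Rightarrow> ('v, 'e) graph) n.
            tlrg (f 0) \<and> (\<forall>i<n. step {r0, r1, r2} (f i) (f (Suc i)))
            \<longrightarrow> n \<le> 2 * card (nodes (f 0)))"
proof -
  have "\<not> (\<forall>i. step {r0, r1, r2} (f i) (f (Suc i)))" for f :: "nat \<Rightarrow> ('v, 'e) graph"
  proof
    assume steps: "\<forall>i. step {r0, r1, r2} (f i) (f (Suc i))"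
    then have "tlrg (f 0)" unfolding step_def direct_derivation_def by blast
    then have "Suc (2 * card (nodes (f 0))) \<le> 2 * card (nodes (f 0))"
      using steps by (intro derivation_length_bound) auto
    then show False by simp
  qed
  then show ?thesis
    unfolding terminating_def using derivation_length_bound by blast
qed

end
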